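(* The Hasse index of order 2 of the class of Dyck lattices is asymptotically Boolean, i.e. $i_2(\mathcal{D}_n)=\frac{sc_2(\mathcal{D}_n)}{|\mathcal{D}_n|}\sim\frac{n^2}{4}$ as $n\to\infty$.
   Context: A Dyck path of semilength $n$ is a lattice path from $(0,0)$ to $(2n,0)$ with steps $(1,1)$ and $(1,-1)$ never going below the $x$-axis. $\mathcal{D}_n$ is the set of Dyck paths of semilength $n$ ordered by containment: $\gamma\le\gamma'$ iff $\gamma$ lies weakly below $\gamma'$. A saturated chain of length $h$ is a sequence $\gamma^{(0)}<\cdots<\gamma^{(h)}$ in which each element covers the previous one; $sc_h(\mathcal{P})$ is the number of saturated chains of length $h$ in a poset $\mathcal{P}$, and the Hasse index of order $h$ is $i_h(\mathcal{P})=sc_h(\mathcal{P})/|\mathcal{P}|$. A sequence of posets $(\mathcal{P}_n)$ has asymptotically Boolean Hasse index of order $h$ if $i_h(\mathcal{P}_n)\sim n^h/2^h$. *)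

theory Defs
  imports Complex_Main "HOL-Library.Landau_Symbols"
begin

text \<open>A lattice path is a list of steps: True = up step (1,1), False = down step (1,-1).\<close>

definition step_val :: "bool \<Rightarrow> int" where
  "step_val b = (if b then 1 else -1)"

definition height :: "bool list \<Rightarrow> int" where
  "height w = sum_list (map step_val w)"

definition dyck_paths :: "nat \<Rightarrow> bool list set" where
  "dyck_paths n = {w. length w = 2 * n \<and> (\<forall>k \<le> length w. height (take k w) \<ge> 0) \<and> height w = 0}"

definition dyck_le :: "bool list \<Rightarrow> bool list \<Rightarrow> bool" where
  "dyck_le w v = (\<forall>k \<le> length w. height (take k w) \<le> height (take k v))"

definition poset_less :: "'a set \<Rightarrow> ('a \<Rightarrow> 'a \<Rightarrow> bool) \<Rightarrow> 'a \<Rightarrow> 'a \<Rightarrow> bool" where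
  "poset_less P le x y = (x \<in> P \<and> y \<in> P \<and> le x y \<and> x \<noteq> y)"

definition covers :: "'a set \<Rightarrow> ('a \<Rightarrow> 'a \<Rightarrow> bool) \<Rightarrow> 'a \<Rightarrow> 'a \<Rightarrow> bool" where
  "covers P le x y = (poset_less P le x y \<and> \<not> (\<exists>z \<in> P. poset_less P le x z \<and> poset_less P le z y))"

definition saturated_chains :: "'a set \<Rightarrow> ('a \<Rightarrow> 'a \<Rightarrow> bool) \<Rightarrow> nat \<Rightarrow> 'a list set" where
  "saturated_chains P le h =
     {c. length c = Suc h \<and> set c \<subseteq> P \<and> (\<forall>i < h. covers P le (c ! i) (c ! Suc i))}"

definition sc :: "'a set \<Rightarrow> ('a \<Rightarrow> 'a \<Rightarrow> bool) \<Rightarrow> nat \<Rightarrow> nat" where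
  "sc P le h = card (saturated_chains P le h)"

definition hasse_index :: "'a set \<Rightarrow> ('a \<Rightarrow> 'a \<Rightarrow> bool) \<Rightarrow> nat \<Rightarrow> real" where
  "hasse_index P le h = real (sc P le h) / real (card P)"

end

theory Submission
  imports Defs "HOL-Real_Asymp.Real_Asymp"
begin

(* The upper covers of a Dyck path are obtained by turning one of its valleys DU into a peak UD, and
   such a flip changes the number of valleys by at most one. Since a nonempty Dyck path with p peaks
   has p - 1 valleys, the saturated 2-chains starting at it number p(p - 1) up to an error of order p,
   so sc_2(D_n) is the second factorial moment of the number of peaks up to O(n |D_n|).
   Inserting a peak UD at each of the 2m + 1 positions of the paths of D_m produces every pair
   (path of D_(m+1), peak of it) exactly once. With the Catalan recurrence, obtained from the
   reflection principle, this gives  sum of p(p - 1) over D_n = (n - 1) n (n + 1) / (2 (2n - 1)) |D_n|,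
   which is asymptotic to n^2/4 |D_n|. *)

lemma sc_2_eq_sum_covers:
  assumes "finite P"
  shows "sc P le 2 = (\<Sum>a\<in>P. \<Sum>b\<in>{b. covers P le a b}. card {c. covers P le b c})"
proof -
  let ?C = "\<lambda>a. {b. covers P le a b}"
  have C: "covers P le a b \<Longrightarrow> b \<in> P" for a b by (simp add: covers_def poset_less_def)
  have fin: "finite (?C a)" for a by (rule finite_subset[OF _ assms]) (auto intro: C)
  let ?T = "SIGMA a:P. SIGMA b:?C a. ?C b"
  have "saturated_chains P le 2 = (\<lambda>(a, b, c). [a, b, c]) ` ?T"
  proof (intro set_eqI iffI)
    fix c assume "c \<in> saturated_chains P le 2"
    then have "length c = 3" "c ! 0 \<in> P" "covers P le (c ! 0) (c ! 1)" "covers P le (c ! 1) (c ! 2)"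
      by (auto simp: saturated_chains_def numeral_2_eq_2 numeral_3_eq_3)
    moreover have "length c = 3 \<Longrightarrow> c = [c ! 0, c ! 1, c ! 2]"
      by (cases c; cases "tl c"; cases "tl (tl c)") (auto simp: numeral_3_eq_3)
    ultimately show "c \<in> (\<lambda>(a, b, c). [a, b, c]) ` ?T"
      by (intro image_eqI[of _ _ "(c ! 0, c ! 1, c ! 2)"]) auto
  next
    fix c assume "c \<in> (\<lambda>(a, b, c). [a, b, c]) ` ?T"
    then show "c \<in> saturated_chains P le 2"
      using C by (auto simp: saturated_chains_def less_Suc_eq numeral_2_eq_2)
  qed
  moreover have "inj_on (\<lambda>(a, b, c). [a, b, c]) ?T" by (rule inj_onI) auto
  ultimately have "sc P le 2 = card ?T" by (simp add: sc_def card_image)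
  also have "\<dots> = (\<Sum>a\<in>P. \<Sum>b\<in>?C a. card (?C b))"
    using assms fin by (simp add: card_SigmaI)
  finally show ?thesis .
qed

lemma height_Nil [simp]: "height [] = 0"
  by (simp add: height_def)

lemma height_Cons [simp]: "height (b # w) = (if b then 1 else -1) + height w"
  by (simp add: height_def step_val_def)

lemma height_append [simp]: "height (u @ v) = height u + height v"
  by (simp add: height_def)

lemma height_take_Suc:
  "k < length w \<Longrightarrow> height (take (Suc k) w) = height (take k w) + (if w ! k then 1 else -1)"
  by (simp add: take_Suc_conv_app_nth)

lemma height_eq_count_True: "height w = 2 * int (length (filter id w)) - int (length w)"
  by (induction w) auto

lemma even_height_take_diff:
  assumes "k \<le> length u" "k \<le> length v"
  shows "even (height (take k u) - height (take k v))"
  using assms by (simp add: height_eq_count_True)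

lemma list_eq_if_prefix_heights_eq:
  assumes "length u = length v" "\<And>k. k \<le> length u \<Longrightarrow> height (take k u) = height (take k v)"
  shows "u = v"
proof (rule nth_equalityI)
  fix k assume "k < length u"
  then show "u ! k = v ! k"
    using assms height_take_Suc[of k u] height_take_Suc[of k v] by (auto split: if_splits)
qed (fact assms(1))

lemma dyck_pathsD:
  assumes "w \<in> dyck_paths n"
  shows "length w = 2 * n" "height (take k w) \<ge> 0" "height w = 0"
  using assms unfolding dyck_paths_def by (cases "k \<le> length w"; simp)+

lemma finite_dyck_paths: "finite (dyck_paths n)"
proof (rule finite_subset)
  show "dyck_paths n \<subseteq> {w. set w \<subseteq> UNIV \<and> length w = 2 * n}"
    by (auto simp: dyck_paths_def)
qed (rule finite_lists_length_eq, simp)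

fun adj_count :: "bool \<Rightarrow> bool \<Rightarrow> bool list \<Rightarrow> nat" where
  "adj_count a b (x # y # w) = (if x = a \<and> y = b then 1 else 0) + adj_count a b (y # w)"
| "adj_count a b _ = 0"

definition adj_pos :: "bool \<Rightarrow> bool \<Rightarrow> bool list \<Rightarrow> nat set" where
  "adj_pos a b w = {i. Suc i < length w \<and> w ! i = a \<and> w ! Suc i = b}"

abbreviation "peaks \<equiv> adj_count True False"
abbreviation "valleys \<equiv> adj_count False True"abbreviation "valley_pos \<equiv> adj_pos False True"

lemma adj_count_Cons:
  "adj_count a b (x # w) = (if w \<noteq> [] \<and> x = a \<and> hd w = b then 1 else 0) + adj_count a b w"
  by (cases w) auto

lemma adj_count_append:
  "adj_count a b (u @ v) = adj_count a b u + adj_count a b v +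
     (if u \<noteq> [] \<and> v \<noteq> [] \<and> last u = a \<and> hd v = b then 1 else 0)"
  by (induction u) (auto simp: adj_count_Cons)

lemma finite_adj_pos [simp]: "finite (adj_pos a b w)"
  by (rule finite_subset[of _ "{..<length w}"]) (auto simp: adj_pos_def)

lemma adj_pos_Cons:
  "adj_pos a b (x # w) =
     (if w \<noteq> [] \<and> x = a \<and> hd w = b then insert 0 else id) (Suc ` adj_pos a b w)"
proof (intro set_eqI)
  fix i show "i \<in> adj_pos a b (x # w) \<longleftrightarrow> i \<in> (if w \<noteq> [] \<and> x = a \<and> hd w = b then insert 0 else id) (Suc ` adj_pos a b w)"
    by (cases i) (auto simp: adj_pos_def hd_conv_nth)
qed

lemma card_adj_pos: "card (adj_pos a b w) = adj_count a b w"
  by (induction w) (auto simp: adj_pos_Cons adj_count_Cons card_image card_insert_if adj_pos_def[of _ _ "[]"])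

lemma peaks_minus_valleys:
  "w \<noteq> [] \<Longrightarrow> int (peaks w) - int (valleys w) = (if hd w then 1 else 0) - (if last w then 1 else 0)"
  by (induction True False w rule: adj_count.induct) (auto simp: adj_count_Cons)

lemma dyck_path_first_last:
  assumes "w \<in> dyck_paths n" "n \<ge> 1"
  shows "hd w" "\<not> last w"
proof -
  have ne: "w \<noteq> []" using dyck_pathsD(1)[OF assms(1)] assms(2) by auto
  show "hd w" using dyck_pathsD(2)[OF assms(1), of 1] ne by (cases w) (auto split: if_splits)
  have "height w = height (butlast w) + (if last w then 1 else -1)"
    using ne by (subst append_butlast_last_id[OF ne, symmetric], subst height_append) simp
  then show "\<not> last w"
    using dyck_pathsD(2)[OF assms(1), of "length w - 1"] dyck_pathsD(3)[OF assms(1)]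
    by (auto simp: butlast_conv_take split: if_splits)
qed

lemma peaks_eq_Suc_valleys:
  "w \<in> dyck_paths n \<Longrightarrow> n \<ge> 1 \<Longrightarrow> peaks w = Suc (valleys w)"
  using peaks_minus_valleys[of w] dyck_path_first_last[of w n] dyck_pathsD(1)[of w n] by force

definition raise_valley :: "bool list \<Rightarrow> nat \<Rightarrow> bool list" where
  "raise_valley w i = take i w @ True # False # drop (Suc (Suc i)) w"

lemma valley_pos_split:
  assumes "i \<in> valley_pos w"
  shows "w = take i w @ False # True # drop (Suc (Suc i)) w"
proof -
  have "Suc i < length w" "\<not> w ! i" "w ! Suc i" using assms by (auto simp: adj_pos_def)
  then show ?thesis
    using id_take_nth_drop[of i w] Cons_nth_drop_Suc[of "Suc i" w] by simp
qed

lemma length_raise_valley: "i \<in> valley_pos w \<Longrightarrow> length (raise_valley w i) = length w"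
  by (auto simp: raise_valley_def adj_pos_def)

lemma height_take_Cons_True_False:
  "height (take k (True # False # v)) = height (take k (False # True # v)) + (if k = 1 then 2 else 0)"
  by (cases k; cases "k - 1") auto

lemma height_take_raise_valley:
  assumes "i \<in> valley_pos w"
  shows "height (take k (raise_valley w i)) = height (take k w) + (if k = Suc i then 2 else 0)"
proof -
  have "length (take i w) = i" using assms by (auto simp: adj_pos_def)
  then show ?thesis
    by (subst (2) valley_pos_split[OF assms]) (auto simp: raise_valley_def take_append height_take_Cons_True_False)
qed

lemma raise_valley_neq: "i \<in> valley_pos w \<Longrightarrow> raise_valley w i \<noteq> w"
  using height_take_raise_valley[of i w "Suc i"] by auto

lemma inj_on_raise_valley: "inj_on (raise_valley w) (valley_pos w)"
proof (rule inj_onI)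
  fix i j assume ij: "i \<in> valley_pos w" "j \<in> valley_pos w" "raise_valley w i = raise_valley w j"
  then show "i = j"
    using height_take_raise_valley[OF ij(1), of "Suc i"] height_take_raise_valley[OF ij(2), of "Suc i"]
    by (auto split: if_splits)
qed

lemma raise_valley_in_dyck_paths:
  assumes "w \<in> dyck_paths n" "i \<in> valley_pos w"
  shows "raise_valley w i \<in> dyck_paths n"
proof -
  have "Suc i < length w" using assms(2) by (simp add: adj_pos_def)
  then have "height (raise_valley w i) = height w"
    using height_take_raise_valley[OF assms(2), of "length w"] length_raise_valley[OF assms(2)] by simp
  then show ?thesis
    using assms dyck_pathsD[OF assms(1)] height_take_raise_valley[OF assms(2)] length_raise_valley[OF assms(2)]
    by (auto simp: dyck_paths_def add_nonneg_nonneg)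
qed

lemma dyck_le_raise_valley: "i \<in> valley_pos w \<Longrightarrow> dyck_le w (raise_valley w i)"
  by (simp add: dyck_le_def height_take_raise_valley)

lemma valleys_raise_valley:
  assumes "i \<in> valley_pos w"
  shows "valleys w \<le> valleys (raise_valley w i) + 1" "valleys (raise_valley w i) \<le> valleys w + 1"
proof -
  have "valleys w = valleys (take i w @ False # True # drop (Suc (Suc i)) w)"
    using valley_pos_split[OF assms] by simp
  then show "valleys w \<le> valleys (raise_valley w i) + 1" "valleys (raise_valley w i) \<le> valleys w + 1"
    by (auto simp: raise_valley_def adj_count_append adj_count_Cons)
qed

lemma dyck_le_between_raise_valley:
  assumes i: "i \<in> valley_pos w" and len: "length z = length w"
    and le: "dyck_le w z" "dyck_le z (raise_valley w i)"
  shows "z = w \<or> z = raise_valley w i"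
proof -
  define d where "d k = height (take k z) - height (take k w)" for k
  have bounds: "0 \<le> d k" "d k \<le> (if k = Suc i then 2 else 0)" if "k \<le> length w" for k
    using le that len height_take_raise_valley[OF i, of k] by (auto simp: dyck_le_def d_def)
  have "Suc i \<le> length w" using i by (simp add: adj_pos_def)
  moreover have "even (d (Suc i))"
    unfolding d_def using calculation len by (intro even_height_take_diff) simp_all
  then obtain m where "d (Suc i) = 2 * m" by (rule evenE)
  ultimately have "d (Suc i) = 0 \<or> d (Suc i) = 2"
    using bounds[of "Suc i"] by auto
  moreover have "d k = 0" if "k \<le> length w" "k \<noteq> Suc i" for k
    using bounds[OF that(1)] that(2) by simp
  ultimately consider "\<forall>k \<le> length w. d k = 0" | "\<forall>k \<le> length w. d k = (if k = Suc i then 2 else 0)"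
    by metis
  then show ?thesis
  proof cases
    case 1
    then have "z = w" using len by (intro list_eq_if_prefix_heights_eq) (auto simp: d_def)
    then show ?thesis ..
  next
    case 2
    then have "z = raise_valley w i"
      using len height_take_raise_valley[OF i] length_raise_valley[OF i]
      by (intro list_eq_if_prefix_heights_eq) (auto simp: d_def)
    then show ?thesis ..
  qed
qed

lemma exists_raise_valley_below:
  assumes a: "a \<in> dyck_paths n" and b: "b \<in> dyck_paths n" and le: "dyck_le a b" and ne: "a \<noteq> b"
  shows "\<exists>i \<in> valley_pos a. dyck_le (raise_valley a i) b"
proof -
  define H where "H w k = height (take k w)" for w k
  define S where "S = {k. k \<le> length a \<and> H a k < H b k}"
  have len: "length b = length a" using dyck_pathsD(1)[OF a] dyck_pathsD(1)[OF b] by simp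
  have le': "H a k \<le> H b k" if "k \<le> length a" for k
    using le that by (simp add: dyck_le_def H_def)
  have "S \<noteq> {}"
  proof
    assume "S = {}"
    then have "H a k = H b k" if "k \<le> length a" for k
      using le'[OF that] that by (force simp: S_def)
    then show False using ne len by (auto simp: H_def intro: list_eq_if_prefix_heights_eq)
  qed
  moreover have "finite S" by (simp add: S_def)
  ultimately obtain p where p: "p \<in> S" and min: "\<And>q. q \<in> S \<Longrightarrow> H a p \<le> H a q"
    using ex_is_arg_min_if_finite[of S "H a"] by (auto simp: is_arg_min_linorder)
  have step: "H w (Suc k) = H w k + (if w ! k then 1 else -1)" if "k < length w" for w k
    using height_take_Suc[OF that] by (simp add: H_def)
  have "p \<noteq> 0" using p by (cases p) (auto simp: S_def H_def)
  moreover have "p \<noteq> length a"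
  proof
    assume "p = length a"
    then show False using p dyck_pathsD(3)[OF a] dyck_pathsD(3)[OF b] len by (simp add: S_def H_def)
  qed
  ultimately obtain i where i: "p = Suc i" "Suc i < length a"
    using p by (cases p) (auto simp: S_def)
  \<comment> \<open>By minimality of \<open>H a p\<close>, both neighbours of \<open>p\<close> lie one step above it.\<close>
  have "\<not> a ! i"
  proof
    assume "a ! i"
    then have "Suc i \<notin> S \<or> i \<in> S"
      using step[of i a] step[of i b] i len p by (auto simp: S_def split: if_splits)
    then show False using min[of i] step[of i a] \<open>a ! i\<close> i p by force
  qed
  moreover have "a ! Suc i"
  proof (rule ccontr)
    assume "\<not> a ! Suc i"
    then have "Suc (Suc i) \<in> S"
      using step[of "Suc i" a] step[of "Suc i" b] i len p by (auto simp: S_def split: if_splits)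
    then show False using min[of "Suc (Suc i)"] step[of "Suc i" a] \<open>\<not> a ! Suc i\<close> i by force
  qed
  ultimately have iv: "i \<in> valley_pos a" using i by (simp add: adj_pos_def)
  have "even (H b p - H a p)"
    unfolding H_def using p len by (intro even_height_take_diff) (auto simp: S_def)
  then obtain m where "H b p - H a p = 2 * m" by (rule evenE)
  moreover have "H a p < H b p" using p by (simp add: S_def)
  ultimately have "H a p + 2 \<le> H b p" by presburger
  then have "dyck_le (raise_valley a i) b"
    using le' i by (auto simp: dyck_le_def H_def height_take_raise_valley[OF iv] length_raise_valley[OF iv])
  then show ?thesis using iv by blast
qed

abbreviation upper_covers :: "nat \<Rightarrow> bool list \<Rightarrow> bool list set" where
  "upper_covers n a \<equiv> {b. covers (dyck_paths n) dyck_le a b}"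

lemma upper_covers_eq:
  assumes a: "a \<in> dyck_paths n"
  shows "upper_covers n a = raise_valley a ` valley_pos a"
proof (intro set_eqI iffI)
  fix b assume "b \<in> upper_covers n a"
  then have b: "b \<in> dyck_paths n" "dyck_le a b" "a \<noteq> b"
    and no_between: "\<And>z. z \<in> dyck_paths n \<Longrightarrow> dyck_le a z \<Longrightarrow> dyck_le z b \<Longrightarrow> z = a \<or> z = b"
    by (auto simp: covers_def poset_less_def)
  obtain i where i: "i \<in> valley_pos a" "dyck_le (raise_valley a i) b"
    using exists_raise_valley_below[OF a b] by blast
  then have "raise_valley a i = b"
    using no_between[of "raise_valley a i"] raise_valley_in_dyck_paths[OF a] dyck_le_raise_valley
      raise_valley_neq by blast
  with i show "b \<in> raise_valley a ` valley_pos a" by blast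
next
  fix b assume "b \<in> raise_valley a ` valley_pos a"
  then obtain i where i: "i \<in> valley_pos a" and b: "b = raise_valley a i" by blast
  have "z = a \<or> z = b" if "z \<in> dyck_paths n" "dyck_le a z" "dyck_le z b" for z
    using dyck_le_between_raise_valley[OF i _ that(2,3)[unfolded b]] that(1) a
    by (auto simp: b dyck_paths_def)
  then show "b \<in> upper_covers n a"
    using raise_valley_in_dyck_paths[OF a i] a dyck_le_raise_valley[OF i] raise_valley_neq[OF i]
    by (auto simp: b covers_def poset_less_def)
qed

lemma card_upper_covers: "a \<in> dyck_paths n \<Longrightarrow> card (upper_covers n a) = valleys a"
  using upper_covers_eq card_image[OF inj_on_raise_valley] card_adj_pos by metis

lemma sum_card_upper_covers_bounds:
  assumes a: "a \<in> dyck_paths n"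
  defines "s \<equiv> (\<Sum>b\<in>upper_covers n a. real (card (upper_covers n b)))"
  shows "real (valleys a) * (real (valleys a) - 1) \<le> s" "s \<le> real (valleys a) * (real (valleys a) + 1)"
proof -
  have s: "s = (\<Sum>i\<in>valley_pos a. real (valleys (raise_valley a i)))"
    unfolding s_def upper_covers_eq[OF a] sum.reindex[OF inj_on_raise_valley]
    by (simp add: card_upper_covers raise_valley_in_dyck_paths[OF a])
  have "real (valleys a) - 1 \<le> real (valleys (raise_valley a i))"
    "real (valleys (raise_valley a i)) \<le> real (valleys a) + 1" if "i \<in> valley_pos a" for i
    using valleys_raise_valley[OF that] by linarith+
  then have "(\<Sum>i\<in>valley_pos a. real (valleys a) - 1) \<le> s" "s \<le> (\<Sum>i\<in>valley_pos a. real (valleys a) + 1)"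
    unfolding s by (blast intro: sum_mono)+
  then show "real (valleys a) * (real (valleys a) - 1) \<le> s" "s \<le> real (valleys a) * (real (valleys a) + 1)"
    by (simp_all add: card_adj_pos mult.commute)
qed

lemma sc_2_dyck_bounds:
  assumes "n \<ge> 1"
  shows "(\<Sum>a\<in>dyck_paths n. (real (peaks a) - 1) * (real (peaks a) - 2)) \<le> real (sc (dyck_paths n) dyck_le 2)"
    "real (sc (dyck_paths n) dyck_le 2) \<le> (\<Sum>a\<in>dyck_paths n. real (peaks a) * (real (peaks a) - 1))"
proof -
  have sc: "real (sc (dyck_paths n) dyck_le 2) =
      (\<Sum>a\<in>dyck_paths n. \<Sum>b\<in>upper_covers n a. real (card (upper_covers n b)))"
    by (simp add: sc_2_eq_sum_covers[OF finite_dyck_paths])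
  have peaks: "real (peaks a) = real (valleys a) + 1" if "a \<in> dyck_paths n" for a
    using peaks_eq_Suc_valleys[OF that assms] by simp
  show "(\<Sum>a\<in>dyck_paths n. (real (peaks a) - 1) * (real (peaks a) - 2)) \<le> real (sc (dyck_paths n) dyck_le 2)"
    unfolding sc using sum_card_upper_covers_bounds(1) peaks by (intro sum_mono) (simp add: algebra_simps)
  show "real (sc (dyck_paths n) dyck_le 2) \<le> (\<Sum>a\<in>dyck_paths n. real (peaks a) * (real (peaks a) - 1))"
    unfolding sc using sum_card_upper_covers_bounds(2) peaks by (intro sum_mono) (simp add: algebra_simps)
qed

definition insert_peak :: "bool list \<Rightarrow> nat \<Rightarrow> bool list" where
  "insert_peak y i = take i y @ True # False # drop i y"

definition delete_peak :: "bool list \<Rightarrow> nat \<Rightarrow> bool list" where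
  "delete_peak x i = take i x @ drop (Suc (Suc i)) x"

abbreviation "peak_pos \<equiv> adj_pos True False"

lemma height_take_insert_peak:
  assumes "i \<le> length y"
  shows "height (take k (insert_peak y i)) =
    (if k \<le> i then height (take k y) else if k = Suc i then height (take i y) + 1
     else height (take (k - 2) y))"
proof -
  consider "k \<le> i" | "k = Suc i" | "i + 2 \<le> k" by linarith
  then show ?thesis
  proof cases
    case 3
    then obtain r where k: "k = i + 2 + r" using le_Suc_ex by blast
    have "take (k - 2) y = take i y @ take r (drop i y)"
      using assms by (simp add: k take_add)
    then show ?thesis using assms by (simp add: k insert_peak_def)
  qed (use assms in \<open>auto simp: insert_peak_def\<close>)
qed

lemma insert_peak_delete_peak: "i \<in> peak_pos x \<Longrightarrow> insert_peak (delete_peak x i) i = x"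
  unfolding adj_pos_def insert_peak_def delete_peak_def
  using id_take_nth_drop[of i x] Cons_nth_drop_Suc[of "Suc i" x] by auto

lemma delete_peak_insert_peak: "i \<le> length y \<Longrightarrow> delete_peak (insert_peak y i) i = y"
  by (simp add: insert_peak_def delete_peak_def)

lemma peak_pos_insert_peak: "i \<le> length y \<Longrightarrow> i \<in> peak_pos (insert_peak y i)"
  by (simp add: adj_pos_def insert_peak_def nth_append)

lemma insert_peak_in_dyck_paths:
  assumes y: "y \<in> dyck_paths m" and i: "i \<le> 2 * m"
  shows "insert_peak y i \<in> dyck_paths (Suc m)"
proof -
  have l: "length (insert_peak y i) = 2 * Suc m"
    using i dyck_pathsD(1)[OF y] by (simp add: insert_peak_def)
  moreover have "height (insert_peak y i) = 0"
    using height_take_insert_peak[of i y "2 * Suc m"] i dyck_pathsD[OF y] l by simp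
  ultimately show ?thesis
    using height_take_insert_peak[of i y] dyck_pathsD[OF y] i by (auto simp: dyck_paths_def add_nonneg_nonneg)
qed

lemma delete_peak_in_dyck_paths:
  assumes x: "x \<in> dyck_paths (Suc m)" and i: "i \<in> peak_pos x"
  shows "delete_peak x i \<in> dyck_paths m"
proof -
  define y where "y = delete_peak x i"
  have si: "Suc i < length x" using i by (simp add: adj_pos_def)
  have ly: "length y = 2 * m" using si dyck_pathsD(1)[OF x] by (simp add: y_def delete_peak_def)
  have "x = insert_peak y i" unfolding y_def using insert_peak_delete_peak[OF i] ..
  then have hx: "height (take k (insert_peak y i)) \<ge> 0" for k
    using dyck_pathsD(2)[OF x] by metis
  have iy: "i \<le> length y" using si ly dyck_pathsD(1)[OF x] by simp
  have "height (take k y) \<ge> 0" for k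
    using hx[of k] hx[of "k + 2"] height_take_insert_peak[OF iy, of k]
      height_take_insert_peak[OF iy, of "k + 2"] by (cases "k \<le> i") auto
  moreover have "height y = 0"
    using hx[of "length y + 2"] height_take_insert_peak[OF iy, of "length y + 2"] \<open>x = insert_peak y i\<close>
      dyck_pathsD(3)[OF x] iy ly dyck_pathsD(1)[OF x]
    by (auto simp: insert_peak_def)
  ultimately show ?thesis using ly by (simp add: dyck_paths_def y_def)
qed

lemma sum_peaks_mult_eq_sum_insert_peak:
  fixes g :: "bool list \<Rightarrow> 'a :: comm_semiring_1"
  shows "(\<Sum>x\<in>dyck_paths (Suc m). of_nat (peaks x) * g x) = (\<Sum>y\<in>dyck_paths m. \<Sum>i\<le>2 * m. g (insert_peak y i))"
proof -
  have "(\<Sum>x\<in>dyck_paths (Suc m). of_nat (peaks x) * g x) = (\<Sum>(x, i)\<in>(SIGMA x:dyck_paths (Suc m). peak_pos x). g x)"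
    by (simp add: sum.Sigma[symmetric] finite_dyck_paths card_adj_pos)
  also have "\<dots> = (\<Sum>(y, i)\<in>(SIGMA y:dyck_paths m. {..2 * m}). g (insert_peak y i))"
  proof (rule sum.reindex_bij_witness[where i = "\<lambda>(y, i). (insert_peak y i, i)" and j = "\<lambda>(x, i). (delete_peak x i, i)"])
    fix xi assume "xi \<in> (SIGMA x:dyck_paths (Suc m). peak_pos x)"
    then obtain x i where xi: "xi = (x, i)" "x \<in> dyck_paths (Suc m)" "i \<in> peak_pos x" by blast
    then have "i \<le> 2 * m" using dyck_pathsD(1)[OF xi(2)] by (simp add: adj_pos_def)
    then show "(case (case xi of (x, i) \<Rightarrow> (delete_peak x i, i)) of (y, i) \<Rightarrow> (insert_peak y i, i)) = xi"
      "(case xi of (x, i) \<Rightarrow> (delete_peak x i, i)) \<in> (SIGMA y:dyck_paths m. {..2 * m})"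
      "(case (case xi of (x, i) \<Rightarrow> (delete_peak x i, i)) of (y, i) \<Rightarrow> g (insert_peak y i)) = (case xi of (x, i) \<Rightarrow> g x)"
      using xi insert_peak_delete_peak delete_peak_in_dyck_paths by auto
  next
    fix yi assume "yi \<in> (SIGMA y:dyck_paths m. {..2 * m})"
    then obtain y i where yi: "yi = (y, i)" "y \<in> dyck_paths m" "i \<le> length y"
      using dyck_pathsD(1) by fastforce
    then show "(case (case yi of (y, i) \<Rightarrow> (insert_peak y i, i)) of (x, i) \<Rightarrow> (delete_peak x i, i)) = yi"
      "(case yi of (y, i) \<Rightarrow> (insert_peak y i, i)) \<in> (SIGMA x:dyck_paths (Suc m). peak_pos x)"
      using delete_peak_insert_peak peak_pos_insert_peak insert_peak_in_dyck_paths dyck_pathsD(1) by auto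
  qed
  also have "\<dots> = (\<Sum>y\<in>dyck_paths m. \<Sum>i\<le>2 * m. g (insert_peak y i))"
    by (simp add: sum.Sigma[symmetric] finite_dyck_paths)
  finally show ?thesis .
qed

lemma peaks_insert_peak:
  assumes "i \<le> length y"
  shows "peaks (insert_peak y i) + (if i \<noteq> 0 \<and> i - 1 \<in> peak_pos y then 1 else 0) = Suc (peaks y)"
proof -
  have "peaks (insert_peak y i) = peaks (take i y) + 1 + peaks (drop i y)"
    unfolding insert_peak_def adj_count_append by (simp add: adj_count_Cons)
  moreover have "peaks y = peaks (take i y) + peaks (drop i y) +
      (if take i y \<noteq> [] \<and> drop i y \<noteq> [] \<and> last (take i y) \<and> \<not> hd (drop i y) then 1 else 0)"
    using adj_count_append[of True False "take i y" "drop i y"] by simp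
  moreover have "(take i y \<noteq> [] \<and> drop i y \<noteq> [] \<and> last (take i y) \<and> \<not> hd (drop i y)) \<longleftrightarrow>
      (i \<noteq> 0 \<and> i - 1 \<in> peak_pos y)"
    using assms by (cases i) (auto simp: adj_pos_def take_Suc_conv_app_nth hd_drop_conv_nth)
  ultimately show ?thesis by auto
qed

lemma sum_peaks_insert_peak: "(\<Sum>i\<le>length y. peaks (insert_peak y i)) = Suc (length y) + length y * peaks y"
proof -
  have "{..length y} \<inter> {i. i \<noteq> 0 \<and> i - 1 \<in> peak_pos y} = Suc ` peak_pos y"
    by (auto simp: adj_pos_def image_iff gr0_conv_Suc)
  then have "(\<Sum>i\<le>length y. if i \<noteq> 0 \<and> i - 1 \<in> peak_pos y then 1 else 0) = peaks y"
    by (simp only: sum.If_cases finite_atMost) (simp add: card_image card_adj_pos)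
  moreover have "(\<Sum>i\<le>length y. peaks (insert_peak y i) + (if i \<noteq> 0 \<and> i - 1 \<in> peak_pos y then 1 else 0))
      = (\<Sum>i\<le>length y. Suc (peaks y))"
    by (rule sum.cong[OF refl], rule peaks_insert_peak) simp
  ultimately show ?thesis by (simp add: sum.distrib)
qed

lemma card_lists_count_True:
  "card {w :: bool list. length w = m \<and> length (filter id w) = k} = m choose k"
proof (cases "k \<le> m")
  case True
  let ?S = "shuffles (replicate k True) (replicate (m - k) False)"
  have "{w. length w = m \<and> length (filter id w) = k} = ?S" (is "?L = _")
  proof (intro set_eqI iffI)
    fix w assume w: "w \<in> {w. length w = m \<and> length (filter id w) = k}"
    have "filter id w = replicate k True" "filter (\<lambda>x. \<not> id x) w = replicate (m - k) False"
      using w sum_length_filter_compl[of id w] replicate_length_same[of "filter id w" True]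
        replicate_length_same[of "filter (\<lambda>x. \<not> id x) w" False] by auto
    then show "w \<in> ?S" using partition_in_shuffles[of w id] by simp
  next
    fix w assume w: "w \<in> ?S"
    then have "filter id w \<in> shuffles (replicate k True) []"
      using filter_shuffles[of id "replicate k True" "replicate (m - k) False"] by auto
    then show "w \<in> {w. length w = m \<and> length (filter id w) = k}"
      using length_shuffles[OF w] True by auto
  qed
  then have "card ?L = card ?S" by simp
  also have "card ?S = m choose k"
    using True by (subst card_disjoint_shuffles) (auto simp: set_replicate_conv_if)
  finally show ?thesis .
next
  case False
  then have "{w :: bool list. length w = m \<and> length (filter id w) = k} = {}"
    using length_filter_le[of id] by (auto intro: le_trans)
  then show ?thesis using False by (simp only: card.empty binomial_eq_0_iff) simp
qed

lemma height_map_Not [simp]: "height (map Not w) = - height w"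
  by (induction w) auto

definition reaches_neg :: "bool list \<Rightarrow> bool" where
  "reaches_neg w \<longleftrightarrow> (\<exists>k. height (take k w) = -1)"

definition first_neg :: "bool list \<Rightarrow> nat" where
  "first_neg w = (LEAST k. height (take k w) = -1)"

definition reflect :: "bool list \<Rightarrow> bool list" where
  "reflect w = take (first_neg w) w @ map Not (drop (first_neg w) w)"

lemma reaches_neg_if_height_take_neg: "height (take k w) < 0 \<Longrightarrow> reaches_neg w"
proof (induction k)
  case (Suc k)
  show ?case
  proof (cases "height (take k w) < 0 \<or> length w \<le> k")
    case True
    then show ?thesis using Suc by auto
  next
    case False
    then have "height (take (Suc k) w) = -1"
      using height_take_Suc[of k w] Suc.prems by (auto split: if_splits)
    then show ?thesis unfolding reaches_neg_def by blast
  qed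
qed simp

lemma height_take_first_neg: "reaches_neg w \<Longrightarrow> height (take (first_neg w) w) = -1"
  unfolding reaches_neg_def first_neg_def by (rule LeastI_ex)

lemma not_height_take_neg_before_first_neg: "k < first_neg w \<Longrightarrow> height (take k w) \<noteq> -1"
  unfolding first_neg_def by (rule not_less_Least)

lemma first_neg_le_length: "reaches_neg w \<Longrightarrow> first_neg w \<le> length w"
  using height_take_first_neg[of w] not_height_take_neg_before_first_neg[of "length w" w]
  by (cases "first_neg w \<le> length w") auto

lemma
  assumes "reaches_neg w"
  shows length_reflect: "length (reflect w) = length w"
    and reaches_neg_reflect: "reaches_neg (reflect w)"
    and reflect_reflect: "reflect (reflect w) = w"
    and height_reflect: "height (reflect w) = -2 - height w"
proof -
  have le: "first_neg w \<le> length w" by (rule first_neg_le_length[OF assms])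
  show "length (reflect w) = length w" using le by (simp add: reflect_def)
  have prefix: "take k (reflect w) = take k w" if "k \<le> first_neg w" for k
    using that le by (simp add: reflect_def)
  then have neg: "height (take (first_neg w) (reflect w)) = -1"
    using height_take_first_neg[OF assms] by simp
  then show "reaches_neg (reflect w)" unfolding reaches_neg_def by blast
  have "first_neg (reflect w) = first_neg w"
    unfolding first_neg_def[of "reflect w"]
  proof (rule Least_equality)
    fix k assume "height (take k (reflect w)) = -1"
    then show "first_neg w \<le> k"
      using prefix[of k] not_height_take_neg_before_first_neg[of k w] by fastforce
  qed (fact neg)
  then show "reflect (reflect w) = w" using le by (simp add: reflect_def comp_def)
  have "height w = height (take (first_neg w) w) + height (drop (first_neg w) w)"
    by (metis append_take_drop_id height_append)
  then show "height (reflect w) = -2 - height w"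
    using height_take_first_neg[OF assms] by (simp add: reflect_def)
qed

(* Reflection principle: reflecting the part after the first visit to height -1 matches the
   balanced paths that go below the axis with the paths ending at height -2. *)
lemma card_dyck_paths_plus_binomial:
  assumes "n \<ge> 1"
  shows "card (dyck_paths n) + (2 * n choose (n - 1)) = 2 * n choose n"
proof -
  define Z where "Z = {w :: bool list. length w = 2 * n \<and> height w = 0}"
  define M where "M = {w :: bool list. length w = 2 * n \<and> height w = -2}"
  define B where "B = {w \<in> Z. reaches_neg w}"
  have Z: "Z = {w. length w = 2 * n \<and> length (filter id w) = n}"
    unfolding Z_def by (auto simp: height_eq_count_True)
  have M: "M = {w. length w = 2 * n \<and> length (filter id w) = n - 1}"
    unfolding M_def using assms by (auto simp: height_eq_count_True)
  have "reaches_neg w" if "w \<in> M" for w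
    using that reaches_neg_if_height_take_neg[of "length w" w] by (simp add: M_def)
  then have "bij_betw reflect B M"
    by (intro bij_betw_byWitness[where f' = reflect]) (auto simp: B_def Z_def M_def length_reflect reaches_neg_reflect reflect_reflect height_reflect)
  then have "card B = card M" by (rule bij_betw_same_card)
  moreover have "Z = dyck_paths n \<union> B"
  proof (intro set_eqI iffI)
    fix w assume w: "w \<in> Z"
    show "w \<in> dyck_paths n \<union> B"
    proof (cases "\<forall>k \<le> length w. height (take k w) \<ge> 0")
      case False
      then have "reaches_neg w" using reaches_neg_if_height_take_neg by (auto simp: not_le)
      then show ?thesis using w by (simp add: B_def)
    qed (use w in \<open>simp add: Z_def dyck_paths_def\<close>)
  qed (auto simp: Z_def B_def dyck_paths_def)
  moreover have "dyck_paths n \<inter> B = {}"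
  proof -
    have "\<not> reaches_neg w" if "w \<in> dyck_paths n" for w
      using dyck_pathsD(2)[OF that] by (metis reaches_neg_def neg_0_le_iff_le not_one_le_zero)
    then show ?thesis by (auto simp: B_def)
  qed
  moreover have "finite Z"
    using finite_lists_length_eq[of "UNIV :: bool set" "2 * n"] by (simp add: Z_def)
  ultimately have "card Z = card (dyck_paths n) + card M"
    by (simp add: card_Un_disjoint finite_dyck_paths)
  then show ?thesis by (simp add: Z M card_lists_count_True)
qed

lemma card_dyck_paths_fact: "real (card (dyck_paths n)) = fact (2 * n) / (fact n * fact (Suc n))"
proof (cases n)
  case 0
  then have "dyck_paths n = {[]}" by (auto simp: dyck_paths_def)
  then show ?thesis using 0 by simp
next
  case (Suc m)
  have "real (card (dyck_paths n)) = real (2 * n choose n) - real (2 * n choose m)"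
    using card_dyck_paths_plus_binomial[of n] Suc by (simp add: of_nat_diff[symmetric])
  also have "real (2 * n choose n) = fact (2 * n) / (fact n * fact n)"
    by (simp add: binomial_fact)
  also have "real (2 * n choose m) = fact (2 * n) / (fact m * fact (Suc n))"
    using binomial_fact[of m "2 * n", where 'a = real] Suc by (simp add: Suc_diff_le)
  also have "fact (2 * n) / (fact n * fact n) - fact (2 * n) / (fact m * fact (Suc n)) =
      (fact (2 * n) :: real) / (fact n * fact (Suc n))"
    using Suc by (simp add: divide_simps) (simp add: algebra_simps)
  finally show ?thesis .
qed

lemma card_dyck_paths_Suc:
  "real (card (dyck_paths (Suc m))) = 2 * (2 * real m + 1) / (real m + 2) * real (card (dyck_paths m))"
proof -
  have "fact (2 * Suc m) = (2 * real m + 2) * (2 * real m + 1) * fact (2 * m)"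
    by (simp add: algebra_simps)
  then show ?thesis
    unfolding card_dyck_paths_fact by (simp add: divide_simps) (simp add: algebra_simps)
qed

lemma sum_peaks_dyck_paths:
  assumes "n \<ge> 1"
  shows "(\<Sum>x\<in>dyck_paths n. real (peaks x)) = (real n + 1) / 2 * real (card (dyck_paths n))"
proof -
  obtain m where n: "n = Suc m" using assms by (cases n) auto
  have "(\<Sum>x\<in>dyck_paths n. real (peaks x)) = (2 * real m + 1) * real (card (dyck_paths m))"
    using sum_peaks_mult_eq_sum_insert_peak[where m = m and g = "\<lambda>_. 1 :: real"] by (simp add: n)
  also have "\<dots> = (real n + 1) / 2 * real (card (dyck_paths n))"
    by (simp add: n card_dyck_paths_Suc divide_simps) (simp add: algebra_simps)
  finally show ?thesis .
qed

lemma sum_peaks_falling_dyck_paths: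
  assumes "n \<ge> 1"
  shows "(\<Sum>x\<in>dyck_paths n. real (peaks x) * (real (peaks x) - 1)) =
    (real n - 1) * real n * (real n + 1) / (2 * (2 * real n - 1)) * real (card (dyck_paths n))"
proof -
  obtain m where n: "n = Suc m" using assms by (cases n) auto
  have "(\<Sum>x\<in>dyck_paths n. real (peaks x) * (real (peaks x) - 1)) =
      (\<Sum>y\<in>dyck_paths m. \<Sum>i\<le>2 * m. real (peaks (insert_peak y i)) - 1)"
    using sum_peaks_mult_eq_sum_insert_peak[where m = m and g = "\<lambda>x. real (peaks x) - 1"] by (simp add: n)
  also have "\<dots> = (\<Sum>y\<in>dyck_paths m. 2 * real m * real (peaks y))"
  proof (rule sum.cong[OF refl])
    fix y assume "y \<in> dyck_paths m"
    then have "(\<Sum>i\<le>2 * m. peaks (insert_peak y i)) = Suc (2 * m) + 2 * m * peaks y"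
      using sum_peaks_insert_peak[of y] dyck_pathsD(1) by simp
    then show "(\<Sum>i\<le>2 * m. real (peaks (insert_peak y i)) - 1) = 2 * real m * real (peaks y)"
      by (simp add: sum_subtractf flip: of_nat_sum)
  qed
  also have "\<dots> = real m * (real m + 1) * real (card (dyck_paths m))"
    using sum_peaks_dyck_paths[of m] by (cases "m = 0") (simp_all add: sum_distrib_left[symmetric])
  also have "\<dots> = (real n - 1) * real n * (real n + 1) / (2 * (2 * real n - 1)) * real (card (dyck_paths n))"
    by (simp add: n card_dyck_paths_Suc divide_simps) (simp add: algebra_simps)
  finally show ?thesis .
qed

lemma hasse_index_dyck_paths_bounds:
  assumes "n \<ge> 1"
  defines "U \<equiv> (real n - 1) * real n * (real n + 1) / (2 * (2 * real n - 1))"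
  shows "U - real n + 1 \<le> hasse_index (dyck_paths n) dyck_le 2"
    "hasse_index (dyck_paths n) dyck_le 2 \<le> U"
proof -
  define c where "c = real (card (dyck_paths n))"
  have "c > 0" unfolding c_def card_dyck_paths_fact by simp
  have "(\<Sum>a\<in>dyck_paths n. (real (peaks a) - 1) * (real (peaks a) - 2)) =
      (\<Sum>a\<in>dyck_paths n. real (peaks a) * (real (peaks a) - 1)) - 2 * (\<Sum>a\<in>dyck_paths n. real (peaks a)) + 2 * c"
  proof -
    have "(real p - 1) * (real p - 2) = real p * (real p - 1) - 2 * real p + 2" for p
      by (simp add: algebra_simps)
    then show ?thesis by (simp add: c_def sum.distrib sum_subtractf sum_distrib_left)
  qed
  also have "\<dots> = (U - real n + 1) * c"
    unfolding sum_peaks_dyck_paths[OF assms(1)] sum_peaks_falling_dyck_paths[OF assms(1)]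
    by (simp add: U_def c_def algebra_simps)
  finally have "(U - real n + 1) * c \<le> real (sc (dyck_paths n) dyck_le 2)"
    using sc_2_dyck_bounds(1)[OF assms(1)] by simp
  then show "U - real n + 1 \<le> hasse_index (dyck_paths n) dyck_le 2"
    using \<open>c > 0\<close> by (simp add: hasse_index_def c_def pos_le_divide_eq)
  have "real (sc (dyck_paths n) dyck_le 2) \<le> U * c"
    using sc_2_dyck_bounds(2)[OF assms(1)] sum_peaks_falling_dyck_paths[OF assms(1)] by (simp add: U_def c_def)
  then show "hasse_index (dyck_paths n) dyck_le 2 \<le> U"
    using \<open>c > 0\<close> by (simp add: hasse_index_def c_def pos_divide_le_eq)
qed

theorem mainTheorem5:
  shows "(\<lambda>n. hasse_index (dyck_paths n) dyck_le 2) \<sim>[at_top] (\<lambda>n. real n ^ 2 / 4)"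
proof (rule asymp_equivI')
  define U where "U n = (real n - 1) * real n * (real n + 1) / (2 * (2 * real n - 1))" for n :: nat
  define h where "h n = hasse_index (dyck_paths n) dyck_le 2" for n
  have "\<forall>\<^sub>F n in at_top. (U n - real n + 1) / (real n ^ 2 / 4) \<le> h n / (real n ^ 2 / 4)"
    using eventually_ge_at_top[of 1]
    unfolding U_def h_def
    by eventually_elim (rule divide_right_mono[OF hasse_index_dyck_paths_bounds(1)], simp_all)
  moreover have "\<forall>\<^sub>F n in at_top. h n / (real n ^ 2 / 4) \<le> U n / (real n ^ 2 / 4)"
    using eventually_ge_at_top[of 1]
    unfolding U_def h_def
    by eventually_elim (rule divide_right_mono[OF hasse_index_dyck_paths_bounds(2)], simp_all)
  moreover have "((\<lambda>n. (U n - real n + 1) / (real n ^ 2 / 4)) \<longlongrightarrow> 1) at_top"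
    "((\<lambda>n. U n / (real n ^ 2 / 4)) \<longlongrightarrow> 1) at_top"
    unfolding U_def by real_asymp+
  ultimately show "((\<lambda>n. hasse_index (dyck_paths n) dyck_le 2 / (real n ^ 2 / 4)) \<longlongrightarrow> 1) at_top"
    unfolding h_def by (rule tendsto_sandwich)
qed

end
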